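(* Let $\mu\in\mathcal P_2(\mathbb{R}^d)$ have full support on $\mathbb{R}^d$ and satisfy $\int\partial_{1,i}\partial_{2,i}k(x,x)\,\mathrm{d}\mu(x)<\infty$ for all $i$, and let $\pi$ be a probability measure with $m_\pi$ well defined. If the RKHS $\mathcal H$ contains the constant functions, then $\overline{\operatorname{Ran}(S_\mu)}=\ker(S_\mu)^{\perp_{\mathcal H}}=\operatorname{span}\{1\}^{\perp_{\mathcal H}}$; otherwise $\overline{\operatorname{Ran}(S_\mu)}=\{0\}^{\perp_{\mathcal H}}=\mathcal H$. In both cases $m_\mu-m_\pi\in\overline{\operatorname{Ran}(S_\mu)}$.
   Context: $k$ is a symmetric positive definite kernel on $\mathbb{R}^d$, continuously differentiable in both arguments, with RKHS $\mathcal H$ (real-valued functions); $\partial_{1,i},\partial_{2,i}$ are partial derivatives in the first/second argument. $m_\nu=\int k(x,\cdot)\mathrm{d}\nu(x)$ is the kernel mean embedding (assumed well defined for $\mu$ and $\pi$). $D_\mu:\mathcal H\to L_2^d(\mu)$, $f\mapsto\nabla f$, has adjoint $D_\mu^*$, and $S_\mu=D_\mu^*D_\mu$, so $\langle f,S_\mu g\rangle_{\mathcal H}=\int\nabla f^\top\nabla g\,\mathrm{d}\mu$. Orthogonal complements $\perp_{\mathcal H}$ and closures are taken in $\mathcal H$. *)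

theory Defs
  imports "HOL-Analysis.Analysis" "HOL-Probability.Probability"
begin

definition pderiv_dir :: "((real^'d) \<Rightarrow> real) \<Rightarrow> 'd \<Rightarrow> real^'d \<Rightarrow> real" where
  "pderiv_dir F i x = deriv (\<lambda>t. F (x + t *\<^sub>R axis i 1)) 0"

definition grad :: "((real^'d) \<Rightarrow> real) \<Rightarrow> real^'d \<Rightarrow> real^'d" where
  "grad F x = (\<chi> i. pderiv_dir F i x)"

definition kpd1 :: "(real^'d \<Rightarrow> real^'d \<Rightarrow> real) \<Rightarrow> 'd \<Rightarrow> real^'d \<Rightarrow> real^'d \<Rightarrow> real" where
  "kpd1 k i x y = pderiv_dir (\<lambda>z. k z y) i x"

definition kpd2 :: "(real^'d \<Rightarrow> real^'d \<Rightarrow> real) \<Rightarrow> 'd \<Rightarrow> real^'d \<Rightarrow> real^'d \<Rightarrow> real" where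
  "kpd2 k j x y = pderiv_dir (\<lambda>z. k x z) j y"

definition kpd12 :: "(real^'d \<Rightarrow> real^'d \<Rightarrow> real) \<Rightarrow> 'd \<Rightarrow> 'd \<Rightarrow> real^'d \<Rightarrow> real^'d \<Rightarrow> real" where
  "kpd12 k i j x y = pderiv_dir (\<lambda>z. kpd2 k j z y) i x"

definition spd_kernel :: "('a \<Rightarrow> 'a \<Rightarrow> real) \<Rightarrow> bool" where
  "spd_kernel k \<longleftrightarrow> (\<forall>x y. k x y = k y x) \<and>
     (\<forall>(n::nat) (x::nat \<Rightarrow> 'a) (c::nat \<Rightarrow> real). (\<Sum>a<n. \<Sum>b<n. c a * c b * k (x a) (x b)) \<ge> 0)"

definition C11_kernel :: "(real^'d \<Rightarrow> real^'d \<Rightarrow> real) \<Rightarrow> bool" where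
  "C11_kernel k \<longleftrightarrow>
     continuous_on UNIV (\<lambda>p. k (fst p) (snd p)) \<and>
     (\<forall>i x y. ((\<lambda>t. k (x + t *\<^sub>R axis i 1) y) has_real_derivative kpd1 k i x y) (at 0)) \<and>
     (\<forall>j x y. ((\<lambda>t. k x (y + t *\<^sub>R axis j 1)) has_real_derivative kpd2 k j x y) (at 0)) \<and>
     (\<forall>i j x y. ((\<lambda>t. kpd2 k j (x + t *\<^sub>R axis i 1) y) has_real_derivative kpd12 k i j x y) (at 0)) \<and>
     (\<forall>i. continuous_on UNIV (\<lambda>p. kpd1 k i (fst p) (snd p))) \<and>
     (\<forall>j. continuous_on UNIV (\<lambda>p. kpd2 k j (fst p) (snd p))) \<and>
     (\<forall>i j. continuous_on UNIV (\<lambda>p. kpd12 k i j (fst p) (snd p)))"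

text \<open>The Hilbert space 'h (with evaluation map evl turning elements into real-valued
  functions, and canonical features kf x = k(x,.)) is the RKHS of k:
  evl is a linear injection identifying 'h with a space of functions, k(x,.) belongs to it,
  and the reproducing property holds.\<close>
definition is_rkhs :: "(real^'d \<Rightarrow> real^'d \<Rightarrow> real) \<Rightarrow> ('h::real_inner \<Rightarrow> real^'d \<Rightarrow> real)
    \<Rightarrow> (real^'d \<Rightarrow> 'h) \<Rightarrow> bool" where
  "is_rkhs k evl kf \<longleftrightarrow>
     (\<forall>f g x. evl (f + g) x = evl f x + evl g x) \<and> (\<forall>a f x. evl (a *\<^sub>R f) x = a * evl f x) \<and> inj evl \<and> (\<forall>x. evl (kf x) = k x) \<and>
     (\<forall>f x. evl f x = inner f (kf x))"

text \<open>The operator S_mu = D_mu^* D_mu, characterised by <f, S_mu g> = int grad f . grad g dmu.\<close>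
definition S_op :: "(real^'d) measure \<Rightarrow> ('h::real_inner \<Rightarrow> real^'d \<Rightarrow> real) \<Rightarrow> 'h \<Rightarrow> 'h" where
  "S_op \<mu> evl g = (THE s. \<forall>f. inner f s = (\<integral>x. grad (evl f) x \<bullet> grad (evl g) x \<partial>\<mu>))"

definition mean_emb :: "(real^'d) measure \<Rightarrow> (real^'d \<Rightarrow> 'h::{banach,second_countable_topology}) \<Rightarrow> 'h" where
  "mean_emb \<nu> kf = (\<integral>x. kf x \<partial>\<nu>)"

end

theory Submission
  imports Defs
begin

text \<open>Because \<open>\<langle>f, S\<^sub>\<mu> g\<rangle> = \<integral> \<nabla>f \<cdot> \<nabla>g d\<mu>\<close> is symmetric in \<open>f\<close> and \<open>g\<close>, the
  projection theorem in the Hilbert space \<open>\<H>\<close> identifies the closure of the range of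
  \<open>S\<^sub>\<mu>\<close> with the orthogonal complement of its kernel. The gradient of \<open>g \<in> \<H>\<close> is
  represented by the elements \<open>\<partial>\<^sub>1\<^sub>,\<^sub>i k(x,\<cdot>)\<close>, obtained as limits of difference quotients of
  the feature map: their inner products are second differences of \<open>k\<close>, which the mean value
  theorem controls by the continuous mixed derivative. Hence \<open>\<nabla>g\<close> is continuous, and since
  \<open>\<langle>g, S\<^sub>\<mu> g\<rangle> = \<integral> |\<nabla>g|\<^sup>2 d\<mu>\<close> with \<open>\<mu>\<close> of full support, \<open>S\<^sub>\<mu> g = 0\<close> exactly when
  \<open>g\<close> is constant. The constants of \<open>\<H>\<close> form \<open>span {1}\<close> or \<open>{0}\<close>, and every constant
  \<open>c\<close> satisfies \<open>\<langle>c, m\<^sub>\<nu>\<rangle> = \<integral> c d\<nu> = c\<close> for probability measures \<open>\<nu>\<close>, so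
  \<open>m\<^sub>\<mu> - m\<^sub>\<pi>\<close> is orthogonal to the kernel.\<close>

lemma subspace_closure:
  fixes V :: "'a::real_normed_vector set"
  assumes "subspace V"
  shows "subspace (closure V)"
  unfolding subspace_def
proof (intro conjI ballI allI)
  show "0 \<in> closure V"
    using assms closure_subset subspace_0 by blast
next
  fix x y assume "x \<in> closure V" "y \<in> closure V"
  then have "x + y \<in> closure (V + V)"
    using closure_sum set_plus_intro by blast
  moreover have "V + V \<subseteq> V"
    using assms by (auto simp: set_plus_def subspace_add)
  ultimately show "x + y \<in> closure V"
    using closure_mono by blast
next
  fix c :: real and x assume "x \<in> closure V"
  then have "c *\<^sub>R x \<in> closure ((*\<^sub>R) c ` V)"
    using closure_scaleR by blast
  moreover have "(*\<^sub>R) c ` V \<subseteq> V"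
    using assms by (auto simp: subspace_scale)
  ultimately show "c *\<^sub>R x \<in> closure V"
    using closure_mono by blast
qed

lemma closed_orthogonal_comp: "closed (orthogonal_comp W)"
proof -
  have "orthogonal_comp W = (\<Inter>y\<in>W. {x. inner y x = 0})"
    by (auto simp: orthogonal_comp_def orthogonal_def)
  then show ?thesis
    by (auto intro!: closed_Collect_eq continuous_intros)
qed

lemma orthogonal_comp_closure: "orthogonal_comp (closure A) = orthogonal_comp A"
proof
  show "orthogonal_comp (closure A) \<subseteq> orthogonal_comp A"
    by (intro orthogonal_comp_anti_mono closure_subset)
  have "closure A \<subseteq> orthogonal_comp (orthogonal_comp A)"
    by (intro closure_minimal orthogonal_comp_subset closed_orthogonal_comp)
  then show "orthogonal_comp A \<subseteq> orthogonal_comp (closure A)"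
    using orthogonal_comp_anti_mono orthogonal_comp_subset by blast
qed

lemma parallelogram_law:
  fixes a b :: "'a::real_inner"
  shows "(norm (a + b))\<^sup>2 + (norm (a - b))\<^sup>2 = 2 * (norm a)\<^sup>2 + 2 * (norm b)\<^sup>2"
  by (simp add: power2_norm_eq_inner inner_diff_left inner_diff_right
      inner_add_left inner_add_right inner_commute)

lemma Cauchy_minimizing_sequence:
  fixes W :: "'a::real_inner set"
  assumes "convex W" and w: "\<And>n. w n \<in> W"
    and lower: "\<And>u. u \<in> W \<Longrightarrow> e \<le> (norm (v - u))\<^sup>2"
    and upper: "\<And>n. (norm (v - w n))\<^sup>2 \<le> e + 1 / Suc n"
  shows "Cauchy w"
proof (rule metric_CauchyI)
  have bound: "(norm (w m - w n))\<^sup>2 \<le> 2 / Suc m + 2 / Suc n" for m n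
  proof -
    have "(1/2) *\<^sub>R w m + (1/2) *\<^sub>R w n \<in> W"
      by (rule convexD[OF \<open>convex W\<close> w w]) auto
    from lower[OF this] have "4 * e \<le> (norm (2 *\<^sub>R (v - ((1/2) *\<^sub>R w m + (1/2) *\<^sub>R w n))))\<^sup>2"
      by (simp add: power_mult_distrib)
    also have "2 *\<^sub>R (v - ((1/2) *\<^sub>R w m + (1/2) *\<^sub>R w n)) = (v - w m) + (v - w n)"
      by (simp add: algebra_simps scaleR_2)
    finally have "4 * e \<le> (norm ((v - w m) + (v - w n)))\<^sup>2" .
    moreover have "(norm ((v - w m) - (v - w n)))\<^sup>2 = (norm (w m - w n))\<^sup>2"
      by (simp add: norm_minus_commute)
    moreover have "2 / real (Suc j) = 2 * (1 / Suc j)" for j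
      by simp
    ultimately show ?thesis
      using parallelogram_law[of "v - w m" "v - w n"] upper[of m] upper[of n] by linarith
  qed
  fix \<epsilon> :: real assume "0 < \<epsilon>"
  have "(\<lambda>n. 2 / real (Suc n)) \<longlonglongrightarrow> 0"
    by (intro LIMSEQ_Suc lim_const_over_n)
  then have "eventually (\<lambda>n. 2 / real (Suc n) < \<epsilon>\<^sup>2 / 2) sequentially"
    using \<open>0 < \<epsilon>\<close> by (intro order_tendstoD(2)) auto
  then obtain N where N: "\<And>n. n \<ge> N \<Longrightarrow> 2 / Suc n < \<epsilon>\<^sup>2 / 2"
    unfolding eventually_sequentially by blast
  show "\<exists>N. \<forall>m\<ge>N. \<forall>n\<ge>N. dist (w m) (w n) < \<epsilon>"
  proof (intro exI allI impI)
    fix m n assume "m \<ge> N" "n \<ge> N"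
    then have "(dist (w m) (w n))\<^sup>2 < \<epsilon>\<^sup>2"
      using bound[of m n] N[of m] N[of n] by (simp add: dist_norm)
    then show "dist (w m) (w n) < \<epsilon>"
      using \<open>0 < \<epsilon>\<close> by (simp add: power_less_imp_less_base)
  qed
qed

lemma exists_nearest_point:
  fixes W :: "'a::{real_inner, complete_space} set"
  assumes "closed W" "convex W" "W \<noteq> {}"
  obtains p where "p \<in> W" "\<And>u. u \<in> W \<Longrightarrow> norm (v - p) \<le> norm (v - u)"
proof -
  define e where "e = (INF u\<in>W. (norm (v - u))\<^sup>2)"
  have bdd: "bdd_below ((\<lambda>u. (norm (v - u))\<^sup>2) ` W)"
    by (intro bdd_belowI2[where m = 0]) simp
  have lower: "e \<le> (norm (v - u))\<^sup>2" if "u \<in> W" for u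
    unfolding e_def using bdd that by (rule cINF_lower)
  have "\<exists>u\<in>W. (norm (v - u))\<^sup>2 < e + 1 / Suc n" for n
    using cINF_less_iff[OF assms(3) bdd, of "e + 1 / Suc n"] by (simp add: e_def)
  then obtain w where w: "\<And>n. w n \<in> W" "\<And>n. (norm (v - w n))\<^sup>2 < e + 1 / Suc n"
    by metis
  have "Cauchy w"
    using assms(2) w lower by (intro Cauchy_minimizing_sequence) (auto intro: less_imp_le)
  then obtain p where p: "w \<longlonglongrightarrow> p"
    using Cauchy_convergent_iff convergent_def by blast
  have "(\<lambda>n. (norm (v - w n))\<^sup>2) \<longlonglongrightarrow> (norm (v - p))\<^sup>2"
    by (intro tendsto_intros p)
  moreover have "(\<lambda>n. e + 1 / Suc n) \<longlonglongrightarrow> e"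
    using tendsto_add[OF tendsto_const LIMSEQ_Suc[OF lim_const_over_n[of 1]], of e] by simp
  ultimately have "(norm (v - p))\<^sup>2 \<le> e"
    using w(2) by (intro LIMSEQ_le) (auto intro: less_imp_le)
  then have "norm (v - p) \<le> norm (v - u)" if "u \<in> W" for u
    using power2_le_imp_le[OF order_trans[OF _ lower[OF that]]] by simp
  moreover have "p \<in> W"
    using closed_sequentially[OF assms(1)] w(1) p by blast
  ultimately show ?thesis
    using that by blast
qed

text \<open>Comparing with the points \<open>p + t u\<close> gives \<open>2 t \<langle>v - p, u\<rangle> \<le> t\<^sup>2 \<parallel>u\<parallel>\<^sup>2\<close> for all \<open>t\<close>.\<close>
lemma nearest_point_orthogonal:
  fixes W :: "'a::real_inner set"
  assumes "subspace W" "p \<in> W" "\<And>u. u \<in> W \<Longrightarrow> norm (v - p) \<le> norm (v - u)" "u \<in> W"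
  shows "inner (v - p) u = 0"
proof -
  define c where "c = inner (v - p) u"
  define n where "n = (norm u)\<^sup>2 + 1"
  have "n > 0"
    by (simp add: n_def add_nonneg_pos)
  have "2 * t * c \<le> t\<^sup>2 * (n - 1)" for t
  proof -
    have "p + t *\<^sub>R u \<in> W"
      using assms by (simp add: subspace_add subspace_scale)
    then have "(norm (v - p))\<^sup>2 \<le> (norm ((v - p) - t *\<^sub>R u))\<^sup>2"
      using assms(3) by (simp add: diff_diff_eq power_mono)
    also have "\<dots> = (norm (v - p))\<^sup>2 - 2 * t * c + t\<^sup>2 * (n - 1)"
      unfolding c_def n_def power2_norm_eq_inner
      by (simp add: inner_diff_left inner_diff_right inner_commute algebra_simps power2_eq_square)
    finally show ?thesis
      by linarith
  qed
  from this[of "c / n"] have "2 * c\<^sup>2 / n \<le> c\<^sup>2 * (n - 1) / n\<^sup>2"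
    by (simp add: power2_eq_square power_divide)
  then have "2 * c\<^sup>2 * n \<le> c\<^sup>2 * (n - 1)"
    using \<open>n > 0\<close> by (simp add: field_simps power2_eq_square)
  then have "c\<^sup>2 * (n + 1) \<le> 0"
    by (simp add: algebra_simps)
  then show ?thesis
    using \<open>n > 0\<close> by (simp add: c_def mult_le_0_iff)
qed

lemma orthogonal_comp_orthogonal_comp:
  fixes W :: "'a::{real_inner, complete_space} set"
  assumes "subspace W" "closed W"
  shows "orthogonal_comp (orthogonal_comp W) = W"
proof
  show "W \<subseteq> orthogonal_comp (orthogonal_comp W)"
    by (rule orthogonal_comp_subset)
  show "orthogonal_comp (orthogonal_comp W) \<subseteq> W"
  proof
    fix v assume v: "v \<in> orthogonal_comp (orthogonal_comp W)"
    obtain p where p: "p \<in> W" "\<And>u. u \<in> W \<Longrightarrow> norm (v - p) \<le> norm (v - u)"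
      using exists_nearest_point[OF assms(2) subspace_imp_convex[OF assms(1)]]
        subspace_0[OF assms(1)] by blast
    have "v - p \<in> orthogonal_comp W"
      using nearest_point_orthogonal[OF assms(1) p]
      by (auto simp: orthogonal_comp_def orthogonal_def inner_commute)
    then have "inner (v - p) v = 0" "inner p (v - p) = 0"
      using v p(1) unfolding orthogonal_comp_def orthogonal_def by blast+
    then have "inner (v - p) (v - p) = 0"
      by (simp add: inner_diff_right inner_commute[of "v - p" p])
    then show "v \<in> W"
      using p(1) by simp
  qed
qed

lemma closure_range_symmetric_operator:
  fixes S :: "'a::{real_inner, complete_space} \<Rightarrow> 'a"
  assumes "linear S" and sym: "\<And>f g. inner f (S g) = inner g (S f)"
  shows "closure (range S) = orthogonal_comp {g. S g = 0}"
proof -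
  have "g \<in> orthogonal_comp (range S) \<longleftrightarrow> S g = 0" for g
  proof
    assume "g \<in> orthogonal_comp (range S)"
    then have "inner (S (S g)) g = 0"
      by (simp add: orthogonal_comp_def orthogonal_def)
    then show "S g = 0"
      by (simp add: inner_commute sym[of g])
  next
    assume "S g = 0"
    then have "inner (S f) g = 0" for f
      by (metis inner_commute inner_zero_right sym)
    then show "g \<in> orthogonal_comp (range S)"
      by (auto simp: orthogonal_comp_def orthogonal_def)
  qed
  then have "orthogonal_comp (range S) = {g. S g = 0}"
    by blast
  moreover have "subspace (closure (range S))"
    using assms(1) by (intro subspace_closure linear_subspace_image subspace_UNIV)
  ultimately show ?thesis
    using orthogonal_comp_orthogonal_comp[of "closure (range S)"]
    by (simp add: orthogonal_comp_closure)
qed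

lemma MVT_abs_le:
  fixes f f' :: "real \<Rightarrow> real"
  assumes "\<And>t. (f has_real_derivative f' t) (at t)"
  obtains z where "\<bar>z\<bar> \<le> \<bar>h\<bar>" "f h - f 0 = h * f' z"
proof (cases h "0::real" rule: linorder_cases)
  case less
  with MVT2[of h 0 f f'] assms obtain z where "h < z" "z < 0" "f 0 - f h = (0 - h) * f' z"
    by blast
  then show ?thesis
    by (intro that[of z]) auto
next
  case equal
  then show ?thesis
    by (intro that[of 0]) auto
next
  case greater
  with MVT2[of 0 h f f'] assms obtain z where "0 < z" "z < h" "f h - f 0 = (h - 0) * f' z"
    by blast
  then show ?thesis
    by (intro that[of z]) auto
qed

lemma DERIV_along_line:
  fixes F :: "'a::real_normed_vector \<Rightarrow> real"
  assumes "\<And>y. ((\<lambda>t. F (y + t *\<^sub>R v)) has_real_derivative F' y) (at 0)"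
  shows "((\<lambda>t. F (x + t *\<^sub>R v)) has_real_derivative F' (x + s *\<^sub>R v)) (at s)"
proof -
  have "((\<lambda>t. F ((x + s *\<^sub>R v) + t *\<^sub>R v)) has_real_derivative F' (x + s *\<^sub>R v)) (at 0)"
    by (rule assms)
  moreover have "(\<lambda>t. F ((x + s *\<^sub>R v) + t *\<^sub>R v)) = (\<lambda>t. F (x + (t + s) *\<^sub>R v))"
    by (simp add: algebra_simps)
  ultimately show ?thesis
    using DERIV_shift[of "\<lambda>t. F (x + t *\<^sub>R v)" _ 0 s] by simp
qed

lemma continuous_AE_zero_imp_zero:
  fixes h :: "'a::topological_space \<Rightarrow> real"
  assumes sets_M: "sets M = sets borel"
    and support: "\<And>U. open U \<Longrightarrow> U \<noteq> {} \<Longrightarrow> emeasure M U > 0"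
    and "continuous_on UNIV h" "AE x in M. h x = 0"
  shows "h x = 0"
proof (rule ccontr)
  assume "h x \<noteq> 0"
  define U where "U = {x. h x \<noteq> 0}"
  have "open U"
    unfolding U_def using assms(3) by (intro open_Collect_neq continuous_intros) auto
  moreover have "space M = UNIV"
    using sets_eq_imp_space_eq[OF sets_M] by simp
  ultimately have "emeasure M U = 0"
    using AE_iff_measurable[of U M "\<lambda>x. h x = 0"] assms(4) sets_M by (simp add: U_def)
  moreover have "emeasure M U > 0"
    using support[OF \<open>open U\<close>] \<open>h x \<noteq> 0\<close> U_def by blast
  ultimately show False
    by simp
qed

locale C11_rkhs =
  fixes k :: "real^'d \<Rightarrow> real^'d \<Rightarrow> real"
    and evl :: "'h::{real_inner, banach, second_countable_topology} \<Rightarrow> real^'d \<Rightarrow> real"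
    and kf :: "real^'d \<Rightarrow> 'h"
  assumes C11: "C11_kernel k" and rkhs: "is_rkhs k evl kf"
begin

lemma evl_eq_inner: "evl f = (\<lambda>x. inner f (kf x))"
  using rkhs unfolding is_rkhs_def by blast

lemma inj_evl: "inj evl"
  using rkhs unfolding is_rkhs_def by blast

lemma kernel_eq_inner: "k x y = inner (kf x) (kf y)"
  using rkhs unfolding is_rkhs_def by metis

lemma kpd2_deriv: "((\<lambda>t. k x (y + t *\<^sub>R axis j 1)) has_real_derivative kpd2 k j x y) (at 0)"
  using C11 unfolding C11_kernel_def by blast

lemma kpd12_deriv:
  "((\<lambda>t. kpd2 k j (x + t *\<^sub>R axis i 1) y) has_real_derivative kpd12 k i j x y) (at 0)"
  using C11 unfolding C11_kernel_def by blast

lemma continuous_on_kpd12: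
  assumes "continuous_on UNIV f" "continuous_on UNIV g"
  shows "continuous_on UNIV (\<lambda>x. kpd12 k i j (f x) (g x))"
proof -
  have "continuous_on UNIV (\<lambda>p. kpd12 k i j (fst p) (snd p))"
    using C11 unfolding C11_kernel_def by blast
  from continuous_on_compose2[OF this continuous_on_Pair[OF assms]] show ?thesis
    by simp
qed

lemma kernel_second_difference:
  obtains \<sigma> \<tau> where "\<bar>\<sigma>\<bar> \<le> \<bar>s\<bar>" "\<bar>\<tau>\<bar> \<le> \<bar>t\<bar>"
    "k (x + s *\<^sub>R axis i 1) (y + t *\<^sub>R axis j 1) - k (x + s *\<^sub>R axis i 1) y
       - k x (y + t *\<^sub>R axis j 1) + k x y
     = s * t * kpd12 k i j (x + \<sigma> *\<^sub>R axis i 1) (y + \<tau> *\<^sub>R axis j 1)"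
proof -
  define h where "h = (\<lambda>r. k (x + s *\<^sub>R axis i 1) (y + r *\<^sub>R axis j 1) - k x (y + r *\<^sub>R axis j 1))"
  have "(h has_real_derivative
      kpd2 k j (x + s *\<^sub>R axis i 1) (y + r *\<^sub>R axis j 1) - kpd2 k j x (y + r *\<^sub>R axis j 1)) (at r)"
    for r
    unfolding h_def
    by (intro DERIV_diff DERIV_along_line[where F = "k _" and F' = "kpd2 k j _"] kpd2_deriv)
  then obtain \<tau> where \<tau>: "\<bar>\<tau>\<bar> \<le> \<bar>t\<bar>"
    "h t - h 0 = t * (kpd2 k j (x + s *\<^sub>R axis i 1) (y + \<tau> *\<^sub>R axis j 1)
       - kpd2 k j x (y + \<tau> *\<^sub>R axis j 1))"
    by (rule MVT_abs_le)
  have "((\<lambda>r. kpd2 k j (x + r *\<^sub>R axis i 1) (y + \<tau> *\<^sub>R axis j 1)) has_real_derivative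
      kpd12 k i j (x + r *\<^sub>R axis i 1) (y + \<tau> *\<^sub>R axis j 1)) (at r)" for r
    by (intro DERIV_along_line[where F = "\<lambda>z. kpd2 k j z _" and F' = "\<lambda>z. kpd12 k i j z _"]
        kpd12_deriv)
  then obtain \<sigma> where "\<bar>\<sigma>\<bar> \<le> \<bar>s\<bar>"
    "kpd2 k j (x + s *\<^sub>R axis i 1) (y + \<tau> *\<^sub>R axis j 1) - kpd2 k j (x + 0 *\<^sub>R axis i 1) (y + \<tau> *\<^sub>R axis j 1)
       = s * kpd12 k i j (x + \<sigma> *\<^sub>R axis i 1) (y + \<tau> *\<^sub>R axis j 1)"
    by (rule MVT_abs_le)
  with \<tau>(2) have "h t - h 0 = s * t * kpd12 k i j (x + \<sigma> *\<^sub>R axis i 1) (y + \<tau> *\<^sub>R axis j 1)"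
    by (simp add: mult_ac)
  moreover have "h t - h 0 = k (x + s *\<^sub>R axis i 1) (y + t *\<^sub>R axis j 1) - k (x + s *\<^sub>R axis i 1) y
      - k x (y + t *\<^sub>R axis j 1) + k x y"
    by (simp add: h_def)
  ultimately show ?thesis
    using \<open>\<bar>\<sigma>\<bar> \<le> \<bar>s\<bar>\<close> \<tau>(1) by (intro that[of \<sigma> \<tau>]) auto
qed

definition kf_quot :: "real^'d \<Rightarrow> 'd \<Rightarrow> real \<Rightarrow> 'h" where
  "kf_quot x i s = (1 / s) *\<^sub>R (kf (x + s *\<^sub>R axis i 1) - kf x)"

lemma inner_kf_quot:
  assumes "s \<noteq> 0" "t \<noteq> 0"
  obtains \<sigma> \<tau> where "\<bar>\<sigma>\<bar> \<le> \<bar>s\<bar>" "\<bar>\<tau>\<bar> \<le> \<bar>t\<bar>"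
    "inner (kf_quot x i s) (kf_quot y j t) = kpd12 k i j (x + \<sigma> *\<^sub>R axis i 1) (y + \<tau> *\<^sub>R axis j 1)"
proof -
  obtain \<sigma> \<tau> where st: "\<bar>\<sigma>\<bar> \<le> \<bar>s\<bar>" "\<bar>\<tau>\<bar> \<le> \<bar>t\<bar>"
    "k (x + s *\<^sub>R axis i 1) (y + t *\<^sub>R axis j 1) - k (x + s *\<^sub>R axis i 1) y
       - k x (y + t *\<^sub>R axis j 1) + k x y
     = s * t * kpd12 k i j (x + \<sigma> *\<^sub>R axis i 1) (y + \<tau> *\<^sub>R axis j 1)"
    by (rule kernel_second_difference)
  have "inner (kf_quot x i s) (kf_quot y j t)
      = (k (x + s *\<^sub>R axis i 1) (y + t *\<^sub>R axis j 1) - k (x + s *\<^sub>R axis i 1) y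
          - k x (y + t *\<^sub>R axis j 1) + k x y) / (s * t)"
    by (simp add: kf_quot_def kernel_eq_inner inner_diff_left inner_diff_right
        diff_divide_distrib add_divide_distrib)
  with st assms show ?thesis
    by (intro that[of \<sigma> \<tau>]) auto
qed

lemma inner_kf_quot_near_diagonal:
  assumes "\<epsilon> > 0"
  obtains \<delta> where "\<delta> > 0" "\<And>s t. s \<noteq> 0 \<Longrightarrow> t \<noteq> 0 \<Longrightarrow> \<bar>s\<bar> < \<delta> \<Longrightarrow> \<bar>t\<bar> < \<delta> \<Longrightarrow>
      \<bar>inner (kf_quot x i s) (kf_quot x i t) - kpd12 k i i x x\<bar> < \<epsilon>"
proof -
  have "continuous_on UNIV (\<lambda>p. kpd12 k i i (fst p) (snd p))"
    by (intro continuous_on_kpd12 continuous_intros)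
  then obtain \<delta> where "\<delta> > 0"
    and \<delta>: "\<And>p. dist p (x, x) < \<delta> \<Longrightarrow> \<bar>kpd12 k i i (fst p) (snd p) - kpd12 k i i x x\<bar> < \<epsilon>"
    using assms unfolding continuous_on_iff dist_real_def by (metis UNIV_I fst_conv snd_conv)
  show ?thesis
  proof (rule that[of "\<delta> / 2"])
    fix s t :: real assume "s \<noteq> 0" "t \<noteq> 0" "\<bar>s\<bar> < \<delta> / 2" "\<bar>t\<bar> < \<delta> / 2"
    obtain \<sigma> \<tau> where st: "\<bar>\<sigma>\<bar> \<le> \<bar>s\<bar>" "\<bar>\<tau>\<bar> \<le> \<bar>t\<bar>"
      "inner (kf_quot x i s) (kf_quot x i t) = kpd12 k i i (x + \<sigma> *\<^sub>R axis i 1) (x + \<tau> *\<^sub>R axis i 1)"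
      by (rule inner_kf_quot[OF \<open>s \<noteq> 0\<close> \<open>t \<noteq> 0\<close>])
    have "dist (x + \<sigma> *\<^sub>R axis i 1, x + \<tau> *\<^sub>R axis i 1) (x, x)
        = norm (\<sigma> *\<^sub>R axis i (1::real), \<tau> *\<^sub>R axis i (1::real))"
      by (simp add: dist_norm)
    also have "\<dots> \<le> norm (\<sigma> *\<^sub>R axis i (1::real)) + norm (\<tau> *\<^sub>R axis i (1::real))"
      by (rule norm_Pair_le)
    also have "\<dots> = \<bar>\<sigma>\<bar> + \<bar>\<tau>\<bar>"
      by simp
    also have "\<dots> < \<delta>"
      using st \<open>\<bar>s\<bar> < \<delta> / 2\<close> \<open>\<bar>t\<bar> < \<delta> / 2\<close> by simp
    finally show "\<bar>inner (kf_quot x i s) (kf_quot x i t) - kpd12 k i i x x\<bar> < \<epsilon>"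
      using \<delta>[of "(x + \<sigma> *\<^sub>R axis i 1, x + \<tau> *\<^sub>R axis i 1)"] st(3) by simp
  qed (use \<open>\<delta> > 0\<close> in simp)
qed

lemma kf_quot_convergent: "\<exists>D. (kf_quot x i \<longlongrightarrow> D) (at 0)"
proof -
  have "cauchy_filter (filtermap (kf_quot x i) (at 0))"
    unfolding cauchy_filter_metric_filtermap
  proof (intro allI impI)
    fix e :: real assume "0 < e"
    then have "e\<^sup>2 / 4 > 0"
      by simp
    then obtain \<delta> where "\<delta> > 0" and \<delta>: "\<And>s t. s \<noteq> 0 \<Longrightarrow> t \<noteq> 0 \<Longrightarrow> \<bar>s\<bar> < \<delta> \<Longrightarrow> \<bar>t\<bar> < \<delta> \<Longrightarrow>
        \<bar>inner (kf_quot x i s) (kf_quot x i t) - kpd12 k i i x x\<bar> < e\<^sup>2 / 4"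
      using inner_kf_quot_near_diagonal[where x = x and i = i] by blast
    show "\<exists>P. eventually P (at 0) \<and>
        (\<forall>s t. P s \<and> P t \<longrightarrow> dist (kf_quot x i s) (kf_quot x i t) < e)"
    proof (intro exI[of _ "\<lambda>s. s \<noteq> 0 \<and> \<bar>s\<bar> < \<delta>"] conjI allI impI)
      show "eventually (\<lambda>s. s \<noteq> 0 \<and> \<bar>s\<bar> < \<delta>) (at (0::real))"
        unfolding eventually_at using \<open>\<delta> > 0\<close> by (intro exI[of _ \<delta>]) auto
    next
      fix s t assume "(s \<noteq> 0 \<and> \<bar>s\<bar> < \<delta>) \<and> (t \<noteq> 0 \<and> \<bar>t\<bar> < \<delta>)"
      then have near: "\<bar>inner (kf_quot x i a) (kf_quot x i b) - kpd12 k i i x x\<bar> < e\<^sup>2 / 4"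
        if "a \<in> {s, t}" "b \<in> {s, t}" for a b
        using that \<delta> by auto
      have "(dist (kf_quot x i s) (kf_quot x i t))\<^sup>2
          = inner (kf_quot x i s) (kf_quot x i s) - 2 * inner (kf_quot x i s) (kf_quot x i t)
            + inner (kf_quot x i t) (kf_quot x i t)"
        by (simp add: dist_norm power2_norm_eq_inner inner_diff_left inner_diff_right inner_commute)
      also have "\<dots> < e\<^sup>2"
        using near[of s s] near[of s t] near[of t t] unfolding abs_less_iff by simp
      finally show "dist (kf_quot x i s) (kf_quot x i t) < e"
        using \<open>0 < e\<close> by (simp add: power_less_imp_less_base)
    qed
  qed
  moreover have "filtermap (kf_quot x i) (at 0) \<noteq> bot"
    by (simp add: filtermap_bot_iff)
  ultimately obtain D where "filtermap (kf_quot x i) (at 0) \<le> nhds D"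
    using cauchy_filter_complete_converges[OF _ complete_UNIV] by (metis principal_UNIV top_greatest)
  then show ?thesis
    unfolding filterlim_def by blast
qed

text \<open>\<open>kf_deriv i x\<close> is the element \<open>\<partial>\<^sub>1\<^sub>,\<^sub>i k(x,\<cdot>)\<close> of \<open>\<H>\<close>.\<close>
definition kf_deriv :: "'d \<Rightarrow> real^'d \<Rightarrow> 'h" where
  "kf_deriv i x = (SOME D. (kf_quot x i \<longlongrightarrow> D) (at 0))"

lemma tendsto_kf_deriv: "(kf_quot x i \<longlongrightarrow> kf_deriv i x) (at 0)"
  unfolding kf_deriv_def using kf_quot_convergent by (rule someI_ex)

lemma evl_has_pderiv:
  "((\<lambda>t. evl f (x + t *\<^sub>R axis i 1)) has_real_derivative inner f (kf_deriv i x)) (at 0)"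
proof -
  have "(\<lambda>t. (evl f (x + t *\<^sub>R axis i 1) - evl f (x + 0 *\<^sub>R axis i 1)) / (t - 0))
      = (\<lambda>t. inner f (kf_quot x i t))"
    by (auto simp: kf_quot_def evl_eq_inner inner_diff_right divide_inverse mult.commute)
  moreover have "((\<lambda>t. inner f (kf_quot x i t)) \<longlongrightarrow> inner f (kf_deriv i x)) (at 0)"
    by (intro tendsto_inner tendsto_const tendsto_kf_deriv)
  ultimately show ?thesis
    unfolding has_field_derivative_iff by simp
qed

lemma inner_grad_evl:
  "grad (evl f) x \<bullet> grad (evl g) x = (\<Sum>i\<in>UNIV. inner f (kf_deriv i x) * inner g (kf_deriv i x))"
proof -
  have "pderiv_dir (evl h) i x = inner h (kf_deriv i x)" for h i
    unfolding pderiv_dir_def by (intro DERIV_imp_deriv evl_has_pderiv)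
  then show ?thesis
    by (simp add: grad_def inner_vec_def)
qed

lemma inner_kf_kf_deriv: "inner (kf z) (kf_deriv j y) = kpd2 k j z y"
proof -
  have "((\<lambda>t. k z (y + t *\<^sub>R axis j 1)) has_real_derivative inner (kf z) (kf_deriv j y)) (at 0)"
    using evl_has_pderiv[of "kf z"] by (simp add: evl_eq_inner kernel_eq_inner)
  then show ?thesis
    using kpd2_deriv DERIV_unique by blast
qed

lemma inner_kf_deriv: "inner (kf_deriv i x) (kf_deriv j y) = kpd12 k i j x y"
proof -
  have "((\<lambda>t. kpd2 k j (x + t *\<^sub>R axis i 1) y) has_real_derivative inner (kf_deriv j y) (kf_deriv i x))
      (at 0)"
    using evl_has_pderiv[of "kf_deriv j y" x i]
    by (simp add: evl_eq_inner inner_commute[of "kf_deriv j y"] inner_kf_kf_deriv)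
  then show ?thesis
    using kpd12_deriv DERIV_unique inner_commute by metis
qed

lemma continuous_on_kf_deriv: "continuous_on UNIV (kf_deriv i)"
  unfolding continuous_on_eq_continuous_at[OF open_UNIV]
proof (intro ballI)
  fix x :: "real^'d"
  define G where "G = (\<lambda>y. kpd12 k i i y y - kpd12 k i i y x - kpd12 k i i x y + kpd12 k i i x x)"
  have G: "norm (kf_deriv i y - kf_deriv i x) = sqrt (G y)" for y
    by (simp add: G_def norm_eq_sqrt_inner inner_diff_left inner_diff_right inner_kf_deriv)
  have "isCont G x"
    unfolding G_def using continuous_on_kpd12[of "\<lambda>y. y" "\<lambda>y. y"] continuous_on_kpd12[of "\<lambda>y. y" "\<lambda>_. x"]
      continuous_on_kpd12[of "\<lambda>_. x" "\<lambda>y. y"]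
    by (intro continuous_intros) (auto simp: continuous_on_eq_continuous_at)
  then have "((\<lambda>y. sqrt (G y)) \<longlongrightarrow> 0) (at x)"
    using tendsto_real_sqrt[of G "G x"] by (simp add: isCont_def G_def)
  then show "isCont (kf_deriv i) x"
    unfolding isCont_def by (simp add: G tendsto_norm_zero_iff LIM_zero_iff flip: G)
qed

lemma evl_constant_iff: "(\<exists>a. evl g = (\<lambda>_. a)) \<longleftrightarrow> (\<forall>i x. inner g (kf_deriv i x) = 0)"
proof
  assume "\<exists>a. evl g = (\<lambda>_. a)"
  then obtain a where "evl g = (\<lambda>_. a)" by blast
  then show "\<forall>i x. inner g (kf_deriv i x) = 0"
    using evl_has_pderiv[of g] DERIV_unique[OF _ DERIV_const] by fastforce
next
  assume deriv0: "\<forall>i x. inner g (kf_deriv i x) = 0"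
  have line: "evl g (z + t *\<^sub>R axis i 1) = evl g z" for z i t
  proof -
    have "((\<lambda>t. evl g (z + t *\<^sub>R axis i 1)) has_real_derivative 0) (at s)" for s
      using DERIV_along_line[where F = "evl g", OF evl_has_pderiv] deriv0 by simp
    from DERIV_isconst_all[OF allI[OF this], of t 0] show ?thesis
      by simp
  qed
  have sum_axes: "evl g (\<Sum>i\<in>I. (y $ i) *\<^sub>R axis i 1) = evl g 0" if "finite I" for I y
    using that
  proof (induction I rule: finite_induct)
    case (insert i I)
    then show ?case
      using line[of "\<Sum>i\<in>I. (y $ i) *\<^sub>R axis i 1" "y $ i" i] by (simp add: add.commute)
  qed simp
  have "evl g y = evl g 0" for y
    using sum_axes[of UNIV y] basis_expansion[of y] by (simp add: scalar_mult_eq_scaleR)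
  then show "\<exists>a. evl g = (\<lambda>_. a)"
    by blast
qed

lemma constants_eq_span:
  assumes "evl c = (\<lambda>_. 1)"
  shows "{g. \<exists>a. evl g = (\<lambda>_. a)} = span {c}"
proof -
  have "evl (a *\<^sub>R c) = (\<lambda>_. a)" for a
    using assms by (simp add: evl_eq_inner fun_eq_iff)
  then have "evl g = (\<lambda>_. a) \<longleftrightarrow> g = a *\<^sub>R c" for g a
    using inj_evl by (metis injD)
  then show ?thesis
    by (auto simp: span_singleton)
qed

lemma constants_eq_zero:
  assumes "\<nexists>c. evl c = (\<lambda>_. 1)"
  shows "{g. \<exists>a. evl g = (\<lambda>_. a)} = {0}"
proof -
  have "a = 0" if "evl g = (\<lambda>_. a)" for g a
  proof (rule ccontr)
    assume "a \<noteq> 0"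
    with that have "evl ((1 / a) *\<^sub>R g) = (\<lambda>_. 1)"
      by (simp add: evl_eq_inner fun_eq_iff)
    with assms show False
      by blast
  qed
  moreover have "evl g = evl 0 \<Longrightarrow> g = 0" for g
    using inj_evl by (simp add: inj_eq)
  ultimately show ?thesis
    by (auto simp: evl_eq_inner fun_eq_iff)
qed

lemma inner_mean_emb_constant:
  assumes "prob_space \<nu>" "integrable \<nu> kf" "evl h = (\<lambda>_. a)"
  shows "inner h (mean_emb \<nu> kf) = a"
proof -
  have "inner h (mean_emb \<nu> kf) = (\<integral>x. inner h (kf x) \<partial>\<nu>)"
    unfolding mean_emb_def using assms(2) by simp
  also have "\<dots> = a"
    using assms(1,3) by (simp add: evl_eq_inner fun_eq_iff prob_space.prob_space)
  finally show ?thesis .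
qed

lemma mean_emb_diff_orthogonal_constants:
  assumes "prob_space \<mu>" "integrable \<mu> kf" "prob_space \<pi>" "integrable \<pi> kf"
  shows "mean_emb \<mu> kf - mean_emb \<pi> kf \<in> orthogonal_comp {g. \<exists>a. evl g = (\<lambda>_. a)}"
  using inner_mean_emb_constant[OF assms(1,2)] inner_mean_emb_constant[OF assms(3,4)]
  by (auto simp: orthogonal_comp_def orthogonal_def inner_diff_right)

end

locale C11_rkhs_measure = C11_rkhs k evl kf
  for k :: "real^'d \<Rightarrow> real^'d \<Rightarrow> real"
    and evl :: "'h::{real_inner, banach, second_countable_topology} \<Rightarrow> real^'d \<Rightarrow> real"
    and kf :: "real^'d \<Rightarrow> 'h" +
  fixes \<mu> :: "(real^'d) measure"
  assumes sets_\<mu>: "sets \<mu> = sets borel"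
    and full_support: "\<forall>U. open U \<and> U \<noteq> {} \<longrightarrow> emeasure \<mu> U > 0"
    and kpd12_diag_finite: "\<forall>i. (\<integral>\<^sup>+x. ennreal (kpd12 k i i x x) \<partial>\<mu>) < \<infinity>"
begin

lemma continuous_imp_measurable: "continuous_on UNIV f \<Longrightarrow> f \<in> borel_measurable \<mu>"
  using measurable_cong_sets[OF sets_\<mu> refl] borel_measurable_continuous_onI by blast

lemma integrable_kpd12_diag: "integrable \<mu> (\<lambda>x. kpd12 k i i x x)"
proof -
  have "kpd12 k i i x x = (norm (kf_deriv i x))\<^sup>2" for x
    by (simp add: power2_norm_eq_inner inner_kf_deriv)
  then have "continuous_on UNIV (\<lambda>x. kpd12 k i i x x)" "kpd12 k i i x x \<ge> 0" for x
    by (auto intro!: continuous_intros continuous_on_kf_deriv)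
  then show ?thesis
    unfolding integrable_iff_bounded using continuous_imp_measurable kpd12_diag_finite by simp
qed

text \<open>The integrand of \<open>S\<^sub>\<mu> g = \<integral> \<Sum>\<^sub>i \<partial>\<^sub>i g(x) \<partial>\<^sub>1\<^sub>,\<^sub>i k(x,\<cdot>) d\<mu>(x)\<close>.\<close>
definition S_integrand :: "'h \<Rightarrow> real^'d \<Rightarrow> 'h" where
  "S_integrand g x = (\<Sum>i\<in>UNIV. inner g (kf_deriv i x) *\<^sub>R kf_deriv i x)"

lemma inner_S_integrand:
  "inner f (S_integrand g x) = (\<Sum>i\<in>UNIV. inner f (kf_deriv i x) * inner g (kf_deriv i x))"
  by (simp add: S_integrand_def inner_sum_right mult.commute)

lemma integrable_S_integrand: "integrable \<mu> (S_integrand g)"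
  unfolding S_integrand_def
proof (intro Bochner_Integration.integrable_sum)
  fix i
  have bound: "\<bar>inner g (kf_deriv i x)\<bar> * norm (kf_deriv i x) \<le> norm g * kpd12 k i i x x" for x
  proof -
    have "\<bar>inner g (kf_deriv i x)\<bar> * norm (kf_deriv i x) \<le> norm g * (norm (kf_deriv i x))\<^sup>2"
      using mult_right_mono[OF Cauchy_Schwarz_ineq2 norm_ge_zero] by (simp add: power2_eq_square mult.assoc)
    then show ?thesis
      by (simp add: power2_norm_eq_inner inner_kf_deriv)
  qed
  have "integrable \<mu> (\<lambda>x. norm g * kpd12 k i i x x)"
    using integrable_kpd12_diag by simp
  moreover have "(\<lambda>x. inner g (kf_deriv i x) *\<^sub>R kf_deriv i x) \<in> borel_measurable \<mu>"
    by (intro continuous_imp_measurable continuous_intros continuous_on_kf_deriv)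
  moreover have "AE x in \<mu>. norm (inner g (kf_deriv i x) *\<^sub>R kf_deriv i x) \<le> norm (norm g * kpd12 k i i x x)"
    by (intro AE_I2) (auto intro: order_trans[OF bound abs_ge_self])
  ultimately show "integrable \<mu> (\<lambda>x. inner g (kf_deriv i x) *\<^sub>R kf_deriv i x)"
    by (rule Bochner_Integration.integrable_bound)
qed

lemma inner_integral_S_integrand:
  "inner f (\<integral>x. S_integrand g x \<partial>\<mu>)
    = (\<integral>x. (\<Sum>i\<in>UNIV. inner f (kf_deriv i x) * inner g (kf_deriv i x)) \<partial>\<mu>)"
proof -
  have "inner f (\<integral>x. S_integrand g x \<partial>\<mu>) = (\<integral>x. inner f (S_integrand g x) \<partial>\<mu>)"
    by (rule integral_inner_right[symmetric]) (rule integrable_S_integrand)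
  then show ?thesis
    by (simp add: inner_S_integrand)
qed

lemma S_op_eq_integral: "S_op \<mu> evl g = (\<integral>x. S_integrand g x \<partial>\<mu>)"
  unfolding S_op_def
proof (rule the_equality)
  show "\<forall>f. inner f (\<integral>x. S_integrand g x \<partial>\<mu>) = (\<integral>x. grad (evl f) x \<bullet> grad (evl g) x \<partial>\<mu>)"
    by (simp add: inner_integral_S_integrand inner_grad_evl)
  fix s assume "\<forall>f. inner f s = (\<integral>x. grad (evl f) x \<bullet> grad (evl g) x \<partial>\<mu>)"
  then have "inner f (s - (\<integral>x. S_integrand g x \<partial>\<mu>)) = 0" for f
    by (simp add: inner_diff_right inner_integral_S_integrand inner_grad_evl)
  from this[of "s - (\<integral>x. S_integrand g x \<partial>\<mu>)"] show "s = (\<integral>x. S_integrand g x \<partial>\<mu>)"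
    by simp
qed

lemma inner_S_op:
  "inner f (S_op \<mu> evl g) = (\<integral>x. (\<Sum>i\<in>UNIV. inner f (kf_deriv i x) * inner g (kf_deriv i x)) \<partial>\<mu>)"
  by (simp add: S_op_eq_integral inner_integral_S_integrand)

lemma S_op_symmetric: "inner f (S_op \<mu> evl g) = inner g (S_op \<mu> evl f)"
  unfolding inner_S_op by (simp add: mult.commute)

lemma linear_S_op: "linear (S_op \<mu> evl)"
proof (rule linearI)
  fix g h :: 'h and c :: real
  have "S_integrand (g + h) = (\<lambda>x. S_integrand g x + S_integrand h x)"
    by (simp add: S_integrand_def inner_add_left scaleR_add_left sum.distrib fun_eq_iff)
  then show "S_op \<mu> evl (g + h) = S_op \<mu> evl g + S_op \<mu> evl h"
    by (simp add: S_op_eq_integral Bochner_Integration.integral_add[OF integrable_S_integrand integrable_S_integrand])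
  have "S_integrand (c *\<^sub>R g) = (\<lambda>x. c *\<^sub>R S_integrand g x)"
    by (simp add: S_integrand_def scaleR_sum_right fun_eq_iff)
  then show "S_op \<mu> evl (c *\<^sub>R g) = c *\<^sub>R S_op \<mu> evl g"
    by (simp add: S_op_eq_integral)
qed

text \<open>\<open>\<langle>g, S\<^sub>\<mu> g\<rangle>\<close> integrates the continuous function \<open>\<parallel>\<nabla>g\<parallel>\<^sup>2\<close> against a measure of full support.\<close>
lemma S_op_eq_0_iff: "S_op \<mu> evl g = 0 \<longleftrightarrow> (\<forall>i x. inner g (kf_deriv i x) = 0)"
proof
  assume S0: "S_op \<mu> evl g = 0"
  define h where "h = (\<lambda>x. inner g (S_integrand g x))"
  have "integrable \<mu> h"
    unfolding h_def by (intro integrable_inner_right integrable_S_integrand)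
  moreover have "h x \<ge> 0" for x
    by (simp add: h_def inner_S_integrand sum_nonneg)
  moreover have "integral\<^sup>L \<mu> h = 0"
    using S0 inner_S_op[of g g] by (simp add: h_def inner_S_integrand)
  ultimately have "AE x in \<mu>. h x = 0"
    by (simp add: integral_nonneg_eq_0_iff_AE)
  moreover have "continuous_on UNIV h"
    unfolding h_def S_integrand_def by (intro continuous_intros continuous_on_kf_deriv)
  ultimately have "h x = 0" for x
    using continuous_AE_zero_imp_zero sets_\<mu> full_support by blast
  then show "\<forall>i x. inner g (kf_deriv i x) = 0"
    by (simp add: h_def inner_S_integrand sum_nonneg_eq_0_iff)
next
  assume "\<forall>i x. inner g (kf_deriv i x) = 0"
  then have "inner (S_op \<mu> evl g) (S_op \<mu> evl g) = 0"
    by (simp add: inner_S_op)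
  then show "S_op \<mu> evl g = 0"
    by simp
qed

lemma kernel_S_op: "{g. S_op \<mu> evl g = 0} = {g. \<exists>a. evl g = (\<lambda>_. a)}"
  by (simp add: S_op_eq_0_iff evl_constant_iff)

end

theorem lemma1:
  fixes k :: "real^'d \<Rightarrow> real^'d \<Rightarrow> real"
    and evl :: "'h::{real_inner, banach, second_countable_topology} \<Rightarrow> real^'d \<Rightarrow> real"
    and kf :: "real^'d \<Rightarrow> 'h"
    and \<mu> \<pi> :: "(real^'d) measure"
  assumes kern: "spd_kernel k" "C11_kernel k"
    and rkhs: "is_rkhs k evl kf"
    and mu_P2: "prob_space \<mu>" "sets \<mu> = sets borel" "integrable \<mu> (\<lambda>x. (norm x)\<^sup>2)"
    and mu_supp: "\<forall>U. open U \<and> U \<noteq> {} \<longrightarrow> emeasure \<mu> U > 0"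
    and mu_int: "\<forall>i. (\<integral>\<^sup>+x. ennreal (kpd12 k i i x x) \<partial>\<mu>) < \<infinity>"
    and mu_emb: "integrable \<mu> kf"
    and pi_prob: "prob_space \<pi>" "sets \<pi> = sets borel"
    and pi_emb: "integrable \<pi> kf"
  shows "((\<exists>c. evl c = (\<lambda>_. 1)) \<longrightarrow>
            closure (range (S_op \<mu> evl)) = orthogonal_comp {g. S_op \<mu> evl g = 0} \<and>
            (\<forall>c. evl c = (\<lambda>_. 1) \<longrightarrow> closure (range (S_op \<mu> evl)) = orthogonal_comp (span {c})))
       \<and> ((\<nexists>c. evl c = (\<lambda>_. 1)) \<longrightarrow>
            closure (range (S_op \<mu> evl)) = orthogonal_comp {0} \<and>
            closure (range (S_op \<mu> evl)) = UNIV)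
       \<and> mean_emb \<mu> kf - mean_emb \<pi> kf \<in> closure (range (S_op \<mu> evl))"
proof -
  interpret C11_rkhs_measure k evl kf \<mu>
    using kern(2) rkhs mu_P2(2) mu_supp mu_int by unfold_locales
  have range_S: "closure (range (S_op \<mu> evl)) = orthogonal_comp {g. \<exists>a. evl g = (\<lambda>_. a)}"
    using closure_range_symmetric_operator[OF linear_S_op S_op_symmetric] by (simp add: kernel_S_op)
  show ?thesis
    unfolding kernel_S_op range_S
    using constants_eq_span constants_eq_zero
      mean_emb_diff_orthogonal_constants[OF mu_P2(1) mu_emb pi_prob(1) pi_emb]
    by auto
qed

end
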